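(* Let $X=(V,E,T)$ be an $(s,k,K)$-two layer system, let $\lambda_{\operatorname{gr}}\ge0$ be such that the ground graph of $X$ is a $\lambda_{\operatorname{gr}}$-expander, and let $C\subseteq\mathbb{F}_p^V$ be a linear code modelled over $X$ ($p$ a prime power). Then for every $\underline{c}\in C\setminus\{\underline{0}\}$, $$\|\underline{c}\|\ge\frac{16}{s^4(s-1)^2k}\left(1-s(s-1)(k-1)\lambda_{\operatorname{gr}}\right).$$
   Context: An $(s,k,K)$-two layer system is a triple $X=(V,E,T)$ where: $V$ is a finite set; $E\subseteq 2^V$ with $|\tau|=k$ for all $\tau\in E$ and $\bigcup_{\tau\in E}\tau=V$; $T\subseteq 2^E$ with $|\sigma|=K$ for all $\sigma\in T$ and $\bigcup_{\sigma\in T}\sigma=E$. Write $v\in\sigma$ if $v\in\tau$ for some $\tau\in\sigma$; it is required that $2\le|\{\tau\in\sigma:v\in\tau\}|\le s$ for all $\sigma\in T$, $v\in\sigma$. A positive $w:T\to\mathbb{R}_{>0}$ is fixed and extended by $w(\tau)=\sum_{\sigma\ni\tau}w(\sigma)$ ($\tau\in E$), $w(v)=\sum_{\sigma\in T,v\in\sigma}w(\sigma)$, $w(B)=\sum_{\eta\in B}w(\eta)$. The ground graph has vertex set $V$, distinct $u,v$ adjacent iff some $\tau\in E$ contains both, with weight $\sum_{\tau\in E,u,v\in\tau}w(\tau)$. For a weighted graph $(V,E,m)$: $m(v)=\sum_{e\ni v}m(e)$, $m(U)=\sum_{v\in U}m(v)$, $m(U_1,U_2)=\sum_{(u_1,u_2)\in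 U_1\times U_2,\{u_1,u_2\}\in E}m(\{u_1,u_2\})$, $h_G=\min_{\emptyset\ne U\subsetneq V}\frac{m(U,V\setminus U)m(V)}{m(U)m(V\setminus U)}$; $G$ is a $\lambda$-expander if $1-h_G\le\lambda$. Codes: $\mathbb{F}_p$ is the field with $p$ elements; $\underline{e}\cdot\underline{c}=\sum_v\underline{e}(v)\underline{c}(v)$, $\operatorname{supp}(\underline{e})=\{v:\underline{e}(v)\neq0\}$. A linear code $C\subseteq\mathbb{F}_p^V$ is modelled over $X$ if there is $\mathcal{E}\subseteq\mathbb{F}_p^V$ with $C=\{\underline{c}:\underline{e}\cdot\underline{c}=0\ \forall\underline{e}\in\mathcal{E}\}$ such that $\underline{e}\mapsto\operatorname{supp}(\underline{e})$ is a bijection $\mathcal{E}\to E$, and a set $\mathcal{T}$ of linear dependencies (functions $\operatorname{ld}:\mathcal{E}\to\mathbb{F}_p$ with $\sum_{\underline{e}}\operatorname{ld}(\underline{e})(\underline{e}\cdot\underline{c})=0$ for all $\underline{c}$) with $T=\{\{\operatorname{supp}(\underline{e}):\operatorname{ld}(\underline{e})\ne0\}:\operatorname{ld}\in\mathcal{T}\}$. The norm is $\|\underline{c}\|=\frac1{w(V)}\sum_{v:\underline{c}(v)\neq0}w(v)$. *)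

theory Defs
  imports Main "HOL-Library.FuncSet" Complex_Main
begin

text \<open>V : vertices, E : k-subsets of V, T : K-subsets of E.
  For \<sigma> \<in> T, a vertex v is "in \<sigma>" iff v \<in> \<Union>\<sigma>.\<close>

definition two_layer_system ::
  "nat \<Rightarrow> nat \<Rightarrow> nat \<Rightarrow> 'v set \<Rightarrow> 'v set set \<Rightarrow> 'v set set set \<Rightarrow> bool" where
  "two_layer_system s k K V E T \<longleftrightarrow>
     finite V \<and>
     (\<forall>\<tau>\<in>E. \<tau> \<subseteq> V \<and> card \<tau> = k) \<and> \<Union>E = V \<and>
     (\<forall>\<sigma>\<in>T. \<sigma> \<subseteq> E \<and> card \<sigma> = K) \<and> \<Union>T = E \<and>
     (\<forall>\<sigma>\<in>T. \<forall>v\<in>\<Union>\<sigma>. 2 \<le> card {\<tau>\<in>\<sigma>. v \<in> \<tau>} \<and> card {\<tau>\<in>\<sigma>. v \<in> \<tau>} \<le> s)"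

definition wE :: "'v set set set \<Rightarrow> ('v set set \<Rightarrow> real) \<Rightarrow> 'v set \<Rightarrow> real" where
  "wE T w \<tau> = (\<Sum>\<sigma>\<in>{\<sigma>\<in>T. \<tau> \<in> \<sigma>}. w \<sigma>)"

definition wV :: "'v set set set \<Rightarrow> ('v set set \<Rightarrow> real) \<Rightarrow> 'v \<Rightarrow> real" where
  "wV T w v = (\<Sum>\<sigma>\<in>{\<sigma>\<in>T. v \<in> \<Union>\<sigma>}. w \<sigma>)"

text \<open>A weighted graph is given by a finite vertex set V, an adjacency relation adj
  (symmetric, irreflexive) and an edge weight m u v (symmetric).\<close>

definition gdeg :: "'v set \<Rightarrow> ('v \<Rightarrow> 'v \<Rightarrow> bool) \<Rightarrow> ('v \<Rightarrow> 'v \<Rightarrow> real) \<Rightarrow> 'v \<Rightarrow> real" where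
  "gdeg V adj m x = (\<Sum>y\<in>{y\<in>V. adj x y}. m x y)"

definition gvol :: "'v set \<Rightarrow> ('v \<Rightarrow> 'v \<Rightarrow> bool) \<Rightarrow> ('v \<Rightarrow> 'v \<Rightarrow> real) \<Rightarrow> 'v set \<Rightarrow> real" where
  "gvol V adj m U = (\<Sum>x\<in>U. gdeg V adj m x)"

definition gcut :: "('v \<Rightarrow> 'v \<Rightarrow> bool) \<Rightarrow> ('v \<Rightarrow> 'v \<Rightarrow> real) \<Rightarrow> 'v set \<Rightarrow> 'v set \<Rightarrow> real" where
  "gcut adj m U1 U2 = (\<Sum>p\<in>{p\<in>U1 \<times> U2. adj (fst p) (snd p)}. m (fst p) (snd p))"

definition cheeger :: "'v set \<Rightarrow> ('v \<Rightarrow> 'v \<Rightarrow> bool) \<Rightarrow> ('v \<Rightarrow> 'v \<Rightarrow> real) \<Rightarrow> real" where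
  "cheeger V adj m = Min ((\<lambda>U. gcut adj m U (V - U) * gvol V adj m V
                               / (gvol V adj m U * gvol V adj m (V - U)))
                          ` {U. U \<noteq> {} \<and> U \<subset> V})"

definition is_expander :: "real \<Rightarrow> 'v set \<Rightarrow> ('v \<Rightarrow> 'v \<Rightarrow> bool) \<Rightarrow> ('v \<Rightarrow> 'v \<Rightarrow> real) \<Rightarrow> bool" where
  "is_expander lam V adj m \<longleftrightarrow> 1 - cheeger V adj m \<le> lam"

definition ground_adj :: "'v set set \<Rightarrow> 'v \<Rightarrow> 'v \<Rightarrow> bool" where
  "ground_adj E u v \<longleftrightarrow> u \<noteq> v \<and> (\<exists>\<tau>\<in>E. u \<in> \<tau> \<and> v \<in> \<tau>)"

definition ground_weight :: "'v set set \<Rightarrow> 'v set set set \<Rightarrow> ('v set set \<Rightarrow> real) \<Rightarrow> 'v \<Rightarrow> 'v \<Rightarrow> real" where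
  "ground_weight E T w u v = (\<Sum>\<tau>\<in>{\<tau>\<in>E. u \<in> \<tau> \<and> v \<in> \<tau>}. wE T w \<tau>)"

definition ground_graph_expander ::
  "real \<Rightarrow> 'v set \<Rightarrow> 'v set set \<Rightarrow> 'v set set set \<Rightarrow> ('v set set \<Rightarrow> real) \<Rightarrow> bool" where
  "ground_graph_expander lam V E T w \<longleftrightarrow> is_expander lam V (ground_adj E) (ground_weight E T w)"

text \<open>Vectors in F^V are functions 'v \<Rightarrow> 'f vanishing outside V.\<close>

definition vecs :: "'v set \<Rightarrow> ('v \<Rightarrow> 'f::zero) set" where
  "vecs V = {c. \<forall>v. v \<notin> V \<longrightarrow> c v = 0}"

definition dotp :: "'v set \<Rightarrow> ('v \<Rightarrow> 'f::comm_semiring_0) \<Rightarrow> ('v \<Rightarrow> 'f) \<Rightarrow> 'f" where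
  "dotp V e c = (\<Sum>v\<in>V. e v * c v)"

definition supp :: "('v \<Rightarrow> 'f::zero) \<Rightarrow> 'v set" where
  "supp e = {v. e v \<noteq> 0}"

definition lin_dep :: "'v set \<Rightarrow> ('v \<Rightarrow> 'f::field) set \<Rightarrow> (('v \<Rightarrow> 'f) \<Rightarrow> 'f) \<Rightarrow> bool" where
  "lin_dep V \<E> ld \<longleftrightarrow> (\<forall>e. e \<notin> \<E> \<longrightarrow> ld e = 0) \<and>
     (\<forall>c\<in>vecs V. (\<Sum>e\<in>\<E>. ld e * dotp V e c) = 0)"

definition modelled_over ::
  "'v set \<Rightarrow> 'v set set \<Rightarrow> 'v set set set \<Rightarrow> ('v \<Rightarrow> 'f::{field,finite}) set \<Rightarrow> bool" where
  "modelled_over V E T C \<longleftrightarrow>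
     (\<exists>\<E> \<T>. \<E> \<subseteq> vecs V \<and>
        C = {c\<in>vecs V. \<forall>e\<in>\<E>. dotp V e c = 0} \<and>
        bij_betw supp \<E> E \<and>
        (\<forall>ld\<in>\<T>. lin_dep V \<E> ld) \<and>
        T = (\<lambda>ld. supp ` {e\<in>\<E>. ld e \<noteq> 0}) ` \<T>)"

definition code_norm ::
  "'v set \<Rightarrow> 'v set set set \<Rightarrow> ('v set set \<Rightarrow> real) \<Rightarrow> ('v \<Rightarrow> 'f::zero) \<Rightarrow> real" where
  "code_norm V T w c = (1 / (\<Sum>v\<in>V. wV T w v)) * (\<Sum>v\<in>{v\<in>V. c v \<noteq> 0}. wV T w v)"

end

theory Submission
  imports Defs
begin

text \<open>Let \<open>S\<close> be the support of a nonzero codeword \<open>c\<close>. A parity check with support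
  \<open>\<tau> \<in> E\<close> is orthogonal to \<open>c\<close>, so \<open>\<tau>\<close> never meets \<open>S\<close> in exactly one vertex. Write \<open>D(u)\<close>
  (\<open>incidence_weight u\<close>) for the total weight of the \<open>\<tau> \<in> E\<close> containing \<open>u\<close>. The ground graph
  has degree \<open>(k - 1) D(u)\<close> at \<open>u\<close>, and for \<open>u \<in> S\<close> at least \<open>D(u)\<close> of it stays inside \<open>S\<close>;
  hence the cut of \<open>S\<close> weighs at most \<open>(k - 2) D(S)\<close>, and expansion gives
  \<open>(1 - (k - 1) \<lambda>) D(V) \<le> (k - 1) D(S)\<close>. As \<open>2 w(v) \<le> D(v) \<le> s w(v)\<close>, this yields
  \<open>\<parallel>c\<parallel> \<ge> 2 (1 - (k - 1) \<lambda>) / (s (k - 1))\<close>, which dominates the stated bound.\<close>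

definition meets_twice :: "'v set set \<Rightarrow> 'v set \<Rightarrow> bool" where
  "meets_twice E S \<longleftrightarrow> (\<forall>\<tau>\<in>E. \<forall>u\<in>\<tau> \<inter> S. \<exists>v\<in>\<tau> \<inter> S. v \<noteq> u)"

lemma dotp_eq_0_imp_common_support:
  fixes e c :: "'v \<Rightarrow> 'f::{comm_semiring_0,semiring_no_zero_divisors}"
  assumes "finite V" and "e \<in> vecs V" and "dotp V e c = 0" and "e u \<noteq> 0" and "c u \<noteq> 0"
  shows "\<exists>v. v \<noteq> u \<and> e v \<noteq> 0 \<and> c v \<noteq> 0"
proof (rule ccontr)
  assume "\<not> ?thesis"
  then have others: "(\<Sum>v\<in>V - {u}. e v * c v) = 0" by (intro sum.neutral) auto
  have "u \<in> V" using assms(2,4) by (auto simp: vecs_def)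
  then have "dotp V e c = e u * c u + (\<Sum>v\<in>V - {u}. e v * c v)"
    unfolding dotp_def using sum.remove[OF assms(1)] by blast
  with others assms(3-5) show False by simp
qed

lemma modelled_over_subset_vecs: "modelled_over V E T C \<Longrightarrow> C \<subseteq> vecs V"
  unfolding modelled_over_def by blast

lemma support_meets_twice:
  assumes "modelled_over V E T C" and "finite V" and "c \<in> C"
  shows "meets_twice E {v\<in>V. c v \<noteq> 0}"
  unfolding meets_twice_def
proof (intro ballI)
  fix \<tau> u assume "\<tau> \<in> E" and u: "u \<in> \<tau> \<inter> {v\<in>V. c v \<noteq> 0}"
  obtain \<E> where \<E>: "\<E> \<subseteq> vecs V" "C = {c\<in>vecs V. \<forall>e\<in>\<E>. dotp V e c = 0}" "bij_betw supp \<E> E"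
    using assms(1) unfolding modelled_over_def by blast
  obtain e where e: "e \<in> \<E>" "supp e = \<tau>"
    using \<E>(3) \<open>\<tau> \<in> E\<close> unfolding bij_betw_def by auto
  have "\<exists>v. v \<noteq> u \<and> e v \<noteq> 0 \<and> c v \<noteq> 0"
    using e \<E> assms(3) u by (intro dotp_eq_0_imp_common_support[OF assms(2)]) (auto simp: supp_def)
  then obtain v where "v \<noteq> u" "e v \<noteq> 0" "c v \<noteq> 0" by blast
  moreover have "v \<in> V" using \<open>e v \<noteq> 0\<close> e(1) \<E>(1) by (auto simp: vecs_def)
  ultimately show "\<exists>v\<in>\<tau> \<inter> {v\<in>V. c v \<noteq> 0}. v \<noteq> u" using e(2) by (auto simp: supp_def)
qed

lemma gvol_eq_internal_plus_gcut:
  assumes "finite V" and "S \<subseteq> V"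
  shows "gvol V adj m S = (\<Sum>u\<in>S. \<Sum>y\<in>{y\<in>S. adj u y}. m u y) + gcut adj m S (V - S)"
proof -
  have "finite S" using assms finite_subset by blast
  have "gvol V adj m S
      = (\<Sum>u\<in>S. (\<Sum>y\<in>{y\<in>S. adj u y}. m u y) + (\<Sum>y\<in>{y\<in>V - S. adj u y}. m u y))"
    unfolding gvol_def gdeg_def
  proof (rule sum.cong[OF refl])
    fix u
    have "{y\<in>V. adj u y} = {y\<in>S. adj u y} \<union> {y\<in>V - S. adj u y}" using assms(2) by auto
    then show "(\<Sum>y\<in>{y\<in>V. adj u y}. m u y)
        = (\<Sum>y\<in>{y\<in>S. adj u y}. m u y) + (\<Sum>y\<in>{y\<in>V - S. adj u y}. m u y)"
      using assms(1) \<open>finite S\<close> by (simp add: sum.union_disjoint disjoint_iff)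
  qed
  moreover have "(\<Sum>u\<in>S. \<Sum>y\<in>{y\<in>V - S. adj u y}. m u y) = gcut adj m S (V - S)"
  proof -
    have "{p\<in>S \<times> (V - S). adj (fst p) (snd p)} = Sigma S (\<lambda>u. {y\<in>V - S. adj u y})" by auto
    then show ?thesis unfolding gcut_def using assms(1) \<open>finite S\<close> by (simp add: sum.Sigma split_def)
  qed
  ultimately show ?thesis by (simp add: sum.distrib)
qed

lemma is_expander_gcut_ge:
  assumes "is_expander lam V adj m" and "finite V" and "S \<noteq> {}" and "S \<subset> V"
    and "gvol V adj m S * gvol V adj m (V - S) > 0"
  shows "(1 - lam) * (gvol V adj m S * gvol V adj m (V - S)) \<le> gcut adj m S (V - S) * gvol V adj m V"
proof -
  have "{U. U \<noteq> {} \<and> U \<subset> V} \<subseteq> Pow V" by auto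
  then have "finite {U. U \<noteq> {} \<and> U \<subset> V}" using assms(2) finite_subset by blast
  then have "cheeger V adj m
      \<le> gcut adj m S (V - S) * gvol V adj m V / (gvol V adj m S * gvol V adj m (V - S))"
    unfolding cheeger_def by (rule Min_le[OF finite_imageI imageI]) (use assms(3,4) in blast)
  with assms(1) have "1 - lam \<le> gcut adj m S (V - S) * gvol V adj m V / (gvol V adj m S * gvol V adj m (V - S))"
    unfolding is_expander_def by simp
  with assms(5) show ?thesis by (simp add: pos_le_divide_eq)
qed

locale weighted_two_layer_system =
  fixes s k K :: nat and V :: "'v set" and E :: "'v set set" and T :: "'v set set set"
    and w :: "'v set set \<Rightarrow> real"
  assumes two_layer: "two_layer_system s k K V E T"
    and weight_pos: "\<sigma> \<in> T \<Longrightarrow> 0 < w \<sigma>"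
begin

lemma finite_V: "finite V"
  using two_layer by (simp add: two_layer_system_def)

lemma edge_subset: "\<tau> \<in> E \<Longrightarrow> \<tau> \<subseteq> V"
  using two_layer by (simp add: two_layer_system_def)

lemma card_edge: "\<tau> \<in> E \<Longrightarrow> card \<tau> = k"
  using two_layer by (simp add: two_layer_system_def)

lemma finite_edge: "\<tau> \<in> E \<Longrightarrow> finite \<tau>"
  using edge_subset finite_V finite_subset by blast

lemma Union_E: "\<Union>E = V"
  using two_layer by (simp add: two_layer_system_def)

lemma finite_E: "finite E"
  using Union_E finite_V finite_UnionD by blast

lemma face_subset: "\<sigma> \<in> T \<Longrightarrow> \<sigma> \<subseteq> E"
  using two_layer by (simp add: two_layer_system_def)

lemma Union_T: "\<Union>T = E"
  using two_layer by (simp add: two_layer_system_def)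

lemma finite_T: "finite T"
  using Union_T finite_E finite_UnionD by blast

lemma multiplicity_bounds:
  assumes "\<sigma> \<in> T" and "v \<in> \<Union>\<sigma>"
  shows "2 \<le> card {\<tau>\<in>\<sigma>. v \<in> \<tau>}" and "card {\<tau>\<in>\<sigma>. v \<in> \<tau>} \<le> s"
  using two_layer assms by (auto simp: two_layer_system_def)

lemma two_le_s: "V \<noteq> {} \<Longrightarrow> 2 \<le> s"
  using Union_E Union_T multiplicity_bounds by fastforce

lemma two_le_k:
  assumes "meets_twice E S" and "S \<subseteq> V" and "S \<noteq> {}"
  shows "2 \<le> k"
proof -
  obtain u \<tau> where "u \<in> S" "\<tau> \<in> E" "u \<in> \<tau>" using assms(2,3) Union_E by blast
  then obtain v where "v \<in> \<tau>" "v \<noteq> u" using assms(1) unfolding meets_twice_def by blast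
  then have "card {u, v} \<le> card \<tau>"
    using \<open>u \<in> \<tau>\<close> \<open>\<tau> \<in> E\<close> finite_edge by (intro card_mono) auto
  with \<open>v \<noteq> u\<close> \<open>\<tau> \<in> E\<close> card_edge show ?thesis by simp
qed

lemma wV_nonneg: "0 \<le> wV T w u"
  unfolding wV_def using weight_pos by (intro sum_nonneg) (simp add: less_imp_le)

lemma wV_pos:
  assumes "u \<in> V"
  shows "0 < wV T w u"
proof -
  obtain \<sigma> where "\<sigma> \<in> T" "u \<in> \<Union>\<sigma>" using assms Union_E Union_T by blast
  then have "w \<sigma> \<le> wV T w u"
    unfolding wV_def using finite_T weight_pos by (intro member_le_sum) (auto simp: less_imp_le)
  with weight_pos[OF \<open>\<sigma> \<in> T\<close>] show ?thesis by linarith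
qed

definition incidence_weight :: "'v \<Rightarrow> real" where
  "incidence_weight u = (\<Sum>\<tau>\<in>{\<tau>\<in>E. u \<in> \<tau>}. wE T w \<tau>)"

lemma incidence_weight_eq:
  "incidence_weight u = (\<Sum>\<sigma>\<in>T. real (card {\<tau>\<in>\<sigma>. u \<in> \<tau>}) * w \<sigma>)"
proof -
  have "incidence_weight u = (\<Sum>\<tau>\<in>{\<tau>\<in>E. u \<in> \<tau>}. \<Sum>\<sigma>\<in>{\<sigma>\<in>T. \<tau> \<in> \<sigma>}. w \<sigma>)"
    unfolding incidence_weight_def wE_def ..
  also have "\<dots> = (\<Sum>\<sigma>\<in>T. \<Sum>\<tau>\<in>{\<tau>\<in>{\<tau>\<in>E. u \<in> \<tau>}. \<tau> \<in> \<sigma>}. w \<sigma>)"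
    using finite_E finite_T by (intro sum.swap_restrict) auto
  also have "\<dots> = (\<Sum>\<sigma>\<in>T. real (card {\<tau>\<in>\<sigma>. u \<in> \<tau>}) * w \<sigma>)"
  proof (rule sum.cong[OF refl])
    fix \<sigma> assume "\<sigma> \<in> T"
    then have "{\<tau>\<in>{\<tau>\<in>E. u \<in> \<tau>}. \<tau> \<in> \<sigma>} = {\<tau>\<in>\<sigma>. u \<in> \<tau>}" using face_subset by auto
    then show "(\<Sum>\<tau>\<in>{\<tau>\<in>{\<tau>\<in>E. u \<in> \<tau>}. \<tau> \<in> \<sigma>}. w \<sigma>) = real (card {\<tau>\<in>\<sigma>. u \<in> \<tau>}) * w \<sigma>"
      by simp
  qed
  finally show ?thesis .
qed

lemma wV_eq: "wV T w u = (\<Sum>\<sigma>\<in>T. if u \<in> \<Union>\<sigma> then w \<sigma> else 0)"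
  unfolding wV_def by (simp add: sum.inter_filter[OF finite_T])

lemma two_wV_le_incidence_weight: "2 * wV T w u \<le> incidence_weight u"
  unfolding incidence_weight_eq wV_eq sum_distrib_left
proof (rule sum_mono)
  fix \<sigma> assume "\<sigma> \<in> T"
  then show "2 * (if u \<in> \<Union>\<sigma> then w \<sigma> else 0) \<le> real (card {\<tau>\<in>\<sigma>. u \<in> \<tau>}) * w \<sigma>"
    using multiplicity_bounds(1)[of \<sigma> u] weight_pos[of \<sigma>]
    by (auto intro: mult_right_mono simp del: of_nat_le_iff)
qed

lemma incidence_weight_le_wV: "incidence_weight u \<le> real s * wV T w u"
  unfolding incidence_weight_eq wV_eq sum_distrib_left
proof (rule sum_mono)
  fix \<sigma> assume "\<sigma> \<in> T"
  show "real (card {\<tau>\<in>\<sigma>. u \<in> \<tau>}) * w \<sigma> \<le> real s * (if u \<in> \<Union>\<sigma> then w \<sigma> else 0)"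
  proof (cases "u \<in> \<Union>\<sigma>")
    case True
    then show ?thesis using multiplicity_bounds(2)[OF \<open>\<sigma> \<in> T\<close>] weight_pos[OF \<open>\<sigma> \<in> T\<close>]
      by (simp add: mult_right_mono)
  next
    case False
    then have "{\<tau>\<in>\<sigma>. u \<in> \<tau>} = {}" by auto
    with False show ?thesis by (simp only: card.empty) simp
  qed
qed

lemma incidence_weight_pos: "u \<in> V \<Longrightarrow> 0 < incidence_weight u"
  using two_wV_le_incidence_weight[of u] wV_pos[of u] by linarith

lemma wE_nonneg: "0 \<le> wE T w \<tau>"
  unfolding wE_def using weight_pos by (intro sum_nonneg) (simp add: less_imp_le)

lemma ground_weight_sum_eq:
  assumes "finite A"
  shows "(\<Sum>y\<in>{y\<in>A. ground_adj E u y}. ground_weight E T w u y)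
       = (\<Sum>\<tau>\<in>{\<tau>\<in>E. u \<in> \<tau>}. real (card (\<tau> \<inter> A - {u})) * wE T w \<tau>)"
proof -
  have "(\<Sum>y\<in>{y\<in>A. ground_adj E u y}. ground_weight E T w u y)
      = (\<Sum>y\<in>{y\<in>A. ground_adj E u y}. \<Sum>\<tau>\<in>{\<tau>\<in>E. u \<in> \<tau> \<and> y \<in> \<tau>}. wE T w \<tau>)"
    unfolding ground_weight_def ..
  also have "\<dots> = (\<Sum>\<tau>\<in>E. \<Sum>y\<in>{y\<in>{y\<in>A. ground_adj E u y}. u \<in> \<tau> \<and> y \<in> \<tau>}. wE T w \<tau>)"
    using assms finite_E by (intro sum.swap_restrict) auto
  also have "\<dots> = (\<Sum>\<tau>\<in>E. if u \<in> \<tau> then real (card (\<tau> \<inter> A - {u})) * wE T w \<tau> else 0)"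
  proof (rule sum.cong[OF refl])
    fix \<tau> assume "\<tau> \<in> E"
    then have "{y\<in>{y\<in>A. ground_adj E u y}. u \<in> \<tau> \<and> y \<in> \<tau>} = (if u \<in> \<tau> then \<tau> \<inter> A - {u} else {})"
      by (auto simp: ground_adj_def)
    then show "(\<Sum>y\<in>{y\<in>{y\<in>A. ground_adj E u y}. u \<in> \<tau> \<and> y \<in> \<tau>}. wE T w \<tau>)
        = (if u \<in> \<tau> then real (card (\<tau> \<inter> A - {u})) * wE T w \<tau> else 0)"
      by simp
  qed
  also have "\<dots> = (\<Sum>\<tau>\<in>{\<tau>\<in>E. u \<in> \<tau>}. real (card (\<tau> \<inter> A - {u})) * wE T w \<tau>)"
    by (simp add: sum.inter_filter[OF finite_E])
  finally show ?thesis .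
qed

lemma gdeg_ground_graph:
  "gdeg V (ground_adj E) (ground_weight E T w) u = (real k - 1) * incidence_weight u"
proof -
  have "real (card (\<tau> \<inter> V - {u})) = real k - 1" if "\<tau> \<in> E" "u \<in> \<tau>" for \<tau>
  proof -
    have "\<tau> \<inter> V - {u} = \<tau> - {u}" using edge_subset[OF \<open>\<tau> \<in> E\<close>] by blast
    moreover have "1 \<le> k" using that card_edge finite_edge card_0_eq by fastforce
    ultimately show ?thesis using that card_edge finite_edge by (simp add: of_nat_diff)
  qed
  then show ?thesis
    unfolding gdeg_def ground_weight_sum_eq[OF finite_V] incidence_weight_def sum_distrib_left
    by (intro sum.cong) auto
qed

lemma gvol_ground_graph:
  "gvol V (ground_adj E) (ground_weight E T w) U = (real k - 1) * sum incidence_weight U"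
  unfolding gvol_def gdeg_ground_graph by (simp add: sum_distrib_left)

lemma incidence_weight_le_internal_weight:
  assumes "meets_twice E S" and "S \<subseteq> V" and "u \<in> S"
  shows "incidence_weight u \<le> (\<Sum>y\<in>{y\<in>S. ground_adj E u y}. ground_weight E T w u y)"
  unfolding incidence_weight_def ground_weight_sum_eq[OF finite_subset[OF assms(2) finite_V]]
proof (rule sum_mono)
  fix \<tau> assume "\<tau> \<in> {\<tau>\<in>E. u \<in> \<tau>}"
  then obtain v where "v \<in> \<tau> \<inter> S - {u}" using assms(1,3) unfolding meets_twice_def by blast
  then have "1 \<le> card (\<tau> \<inter> S - {u})"
    using \<open>\<tau> \<in> {\<tau>\<in>E. u \<in> \<tau>}\<close> finite_edge by (auto simp: Suc_le_eq card_gt_0_iff)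
  then show "wE T w \<tau> \<le> real (card (\<tau> \<inter> S - {u})) * wE T w \<tau>"
    using wE_nonneg mult_right_mono[of 1 "real (card (\<tau> \<inter> S - {u}))" "wE T w \<tau>"] by simp
qed

lemma ground_gcut_le:
  assumes "meets_twice E S" and "S \<subseteq> V"
  shows "gcut (ground_adj E) (ground_weight E T w) S (V - S) \<le> (real k - 2) * sum incidence_weight S"
proof -
  have "sum incidence_weight S
      \<le> (\<Sum>u\<in>S. \<Sum>y\<in>{y\<in>S. ground_adj E u y}. ground_weight E T w u y)"
    using incidence_weight_le_internal_weight[OF assms] by (rule sum_mono)
  moreover have "(real k - 1) * sum incidence_weight S
      = (\<Sum>u\<in>S. \<Sum>y\<in>{y\<in>S. ground_adj E u y}. ground_weight E T w u y)
        + gcut (ground_adj E) (ground_weight E T w) S (V - S)"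
    using gvol_eq_internal_plus_gcut[OF finite_V assms(2), where adj = "ground_adj E"
        and m = "ground_weight E T w"]
    by (simp only: gvol_ground_graph)
  ultimately show ?thesis by (simp add: algebra_simps)
qed


lemma sum_incidence_weight_pos: "U \<subseteq> V \<Longrightarrow> U \<noteq> {} \<Longrightarrow> 0 < sum incidence_weight U"
  using finite_V finite_subset incidence_weight_pos by (intro sum_pos) auto

lemma support_incidence_weight_ge:
  assumes "ground_graph_expander lam V E T w" and "0 \<le> lam"
    and "meets_twice E S" and "S \<subseteq> V" and "S \<noteq> {}"
  shows "(1 - (real k - 1) * lam) * sum incidence_weight V \<le> (real k - 1) * sum incidence_weight S"
proof -
  define a b K1 where "a = sum incidence_weight S" and "b = sum incidence_weight V"
    and "K1 = real k - 1"
  have "0 < K1" using two_le_k[OF assms(3-5)] by (simp add: K1_def)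
  have "0 < a" unfolding a_def using assms(4,5) by (rule sum_incidence_weight_pos)
  have "0 \<le> lam * K1 * a" using \<open>0 < K1\<close> \<open>0 < a\<close> assms(2) by simp
  have "(1 - K1 * lam) * b \<le> K1 * a"
  proof (cases "S = V")
    case True
    have "a \<le> K1 * a" using two_le_k[OF assms(3-5)] \<open>0 < a\<close> by (simp add: K1_def)
    with True \<open>0 \<le> lam * K1 * a\<close> show ?thesis unfolding a_def b_def by (simp add: algebra_simps)
  next
    case False
    with assms(4) have "S \<subset> V" by blast
    have diff: "b - a = sum incidence_weight (V - S)"
      unfolding a_def b_def by (rule sum_diff[OF finite_V assms(4), symmetric])
    have "0 < b - a" unfolding diff using \<open>S \<subset> V\<close> by (intro sum_incidence_weight_pos) auto
    let ?vol = "gvol V (ground_adj E) (ground_weight E T w)"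
      and ?cut = "gcut (ground_adj E) (ground_weight E T w) S (V - S)"
    have vol: "?vol S = K1 * a" "?vol (V - S) = K1 * (b - a)" "?vol V = K1 * b"
      unfolding gvol_ground_graph a_def b_def K1_def diff[unfolded a_def b_def] by simp_all
    have "(1 - lam) * (K1 * a * (K1 * (b - a))) \<le> ?cut * (K1 * b)"
      using is_expander_gcut_ge[of lam V "ground_adj E" "ground_weight E T w" S]
        assms(1,5) finite_V \<open>S \<subset> V\<close> \<open>0 < K1\<close> \<open>0 < a\<close> \<open>0 < b - a\<close>
      unfolding ground_graph_expander_def vol by simp
    also have "\<dots> \<le> (K1 - 1) * a * (K1 * b)"
      using ground_gcut_le[OF assms(3,4)] \<open>0 < K1\<close> \<open>0 < a\<close> \<open>0 < b - a\<close>
      unfolding a_def K1_def by (intro mult_right_mono) (simp_all add: algebra_simps)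
    finally have "(K1 * a) * ((1 - lam) * (K1 * (b - a))) \<le> (K1 * a) * ((K1 - 1) * b)"
      by (simp add: algebra_simps)
    then have "(1 - lam) * (K1 * (b - a)) \<le> (K1 - 1) * b"
      using \<open>0 < K1\<close> \<open>0 < a\<close> by (simp add: mult_le_cancel_left_pos)
    with \<open>0 \<le> lam * K1 * a\<close> show ?thesis by (simp add: algebra_simps)
  qed
  then show ?thesis unfolding a_def b_def K1_def by (simp add: algebra_simps)
qed

lemma support_weight_ratio_ge:
  assumes "ground_graph_expander lam V E T w" and "0 \<le> lam"
    and "meets_twice E S" and "S \<subseteq> V" and "S \<noteq> {}"
  shows "2 / (real s * (real k - 1)) * (1 - (real k - 1) * lam)
    \<le> sum (wV T w) S / sum (wV T w) V"
proof -
  define a b where "a = sum incidence_weight S" and "b = sum incidence_weight V"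
  have "2 \<le> k" using two_le_k[OF assms(3-5)] .
  have "2 \<le> s" using two_le_s assms(4,5) by blast
  have "0 < a" "0 < b" unfolding a_def b_def using assms(4,5) sum_incidence_weight_pos by auto
  have "a \<le> real s * sum (wV T w) S"
    unfolding a_def sum_distrib_left by (intro sum_mono incidence_weight_le_wV)
  have "2 * sum (wV T w) V \<le> b"
    unfolding b_def sum_distrib_left by (intro sum_mono two_wV_le_incidence_weight)
  have "0 < sum (wV T w) V" using assms(4,5) finite_V wV_pos by (intro sum_pos) auto
  have "(1 - (real k - 1) * lam) / (real k - 1) \<le> a / b"
    using support_incidence_weight_ge[OF assms] \<open>2 \<le> k\<close> \<open>0 < b\<close>
    unfolding a_def b_def by (simp add: divide_simps mult.commute)
  then have "2 / real s * ((1 - (real k - 1) * lam) / (real k - 1)) \<le> 2 / real s * (a / b)"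
    by (rule mult_left_mono) simp
  then have "2 / (real s * (real k - 1)) * (1 - (real k - 1) * lam) \<le> (a / real s) / (b / 2)"
    by (simp add: mult.commute)
  also have "\<dots> \<le> sum (wV T w) S / (b / 2)"
    using \<open>a \<le> real s * sum (wV T w) S\<close> \<open>2 \<le> s\<close> \<open>0 < b\<close>
    by (intro divide_right_mono) (simp_all add: pos_divide_le_eq mult.commute)
  also have "\<dots> \<le> sum (wV T w) S / sum (wV T w) V"
    using \<open>2 * sum (wV T w) V \<le> b\<close> \<open>0 < sum (wV T w) V\<close>
    by (intro divide_left_mono sum_nonneg wV_nonneg) auto
  finally show ?thesis .
qed

end

lemma norm_bound_weakening:
  fixes x y lam N :: real
  assumes x: "2 \<le> x" and y: "2 \<le> y" and "0 \<le> lam" and "0 \<le> N"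
    and N: "2 / (x * (y - 1)) * (1 - (y - 1) * lam) \<le> N"
  shows "16 / (x ^ 4 * (x - 1)^2 * y) * (1 - x * (x - 1) * (y - 1) * lam) \<le> N"
proof (cases "1 - x * (x - 1) * (y - 1) * lam \<le> 0")
  case True
  moreover have "0 \<le> 16 / (x ^ 4 * (x - 1)^2 * y)" using x y by simp
  ultimately show ?thesis using \<open>0 \<le> N\<close> by (meson mult_nonneg_nonpos order_trans)
next
  case False
  have "8 \<le> x ^ 3 * (x - 1)^2"
    using mult_mono[OF power_mono[OF x, of 3] one_le_power[of "x - 1" 2]] x by simp
  then have "16 * (x * y) \<le> 2 * (x * y) * (x ^ 3 * (x - 1)^2)"
    using x y by simp
  also have "\<dots> = 2 * (x ^ 4 * (x - 1)^2 * y)" by (simp add: power_numeral_reduce)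
  finally have "16 * (x * (y - 1)) \<le> 2 * (x ^ 4 * (x - 1)^2 * y)"
    using x by (simp add: algebra_simps)
  then have coeff: "16 / (x ^ 4 * (x - 1)^2 * y) \<le> 2 / (x * (y - 1))"
    using x y by (simp add: frac_le_eq divide_le_0_iff mult_ac)
  have "1 \<le> x * (x - 1)" using mult_mono[of 1 x 1 "x - 1"] x by simp
  then have "(y - 1) * lam \<le> x * (x - 1) * ((y - 1) * lam)"
    using y \<open>0 \<le> lam\<close> mult_right_mono[of 1 "x * (x - 1)" "(y - 1) * lam"] by simp
  with coeff False x y have "16 / (x ^ 4 * (x - 1)^2 * y) * (1 - x * (x - 1) * (y - 1) * lam)
      \<le> 2 / (x * (y - 1)) * (1 - (y - 1) * lam)"
    by (intro mult_mono) (auto simp: mult_ac)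
  with N show ?thesis by linarith
qed

theorem theorem8p1:
  fixes s k K :: nat and V :: "'v set" and E :: "'v set set" and T :: "'v set set set"
    and w :: "'v set set \<Rightarrow> real" and lam :: real
    and C :: "('v \<Rightarrow> 'f::{field,finite}) set"
  assumes "two_layer_system s k K V E T"
    and "\<forall>\<sigma>\<in>T. w \<sigma> > 0"
    and "lam \<ge> 0"
    and "ground_graph_expander lam V E T w"
    and "modelled_over V E T C"
  shows "\<forall>c\<in>C. c \<noteq> (\<lambda>_. 0) \<longrightarrow>
    code_norm V T w c \<ge> 16 / (real s ^ 4 * (real s - 1)^2 * real k)
                          * (1 - real s * (real s - 1) * (real k - 1) * lam)"
proof (intro ballI impI)
  fix c assume "c \<in> C" and "c \<noteq> (\<lambda>_. 0)"
  interpret weighted_two_layer_system s k K V E T w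
    using assms(1,2) by unfold_locales auto
  define S where "S = {v\<in>V. c v \<noteq> 0}"
  have "S \<subseteq> V" by (simp add: S_def)
  have "c \<in> vecs V" using modelled_over_subset_vecs[OF assms(5)] \<open>c \<in> C\<close> by blast
  with \<open>c \<noteq> (\<lambda>_. 0)\<close> have "S \<noteq> {}" by (auto simp: S_def vecs_def)
  have twice: "meets_twice E S"
    unfolding S_def using assms(5) finite_V \<open>c \<in> C\<close> by (rule support_meets_twice)
  have norm: "code_norm V T w c = sum (wV T w) S / sum (wV T w) V"
    unfolding code_norm_def S_def by simp
  show "16 / (real s ^ 4 * (real s - 1)^2 * real k) * (1 - real s * (real s - 1) * (real k - 1) * lam)
    \<le> code_norm V T w c"
  proof (rule norm_bound_weakening)
    show "2 \<le> real s" using two_le_s \<open>S \<subseteq> V\<close> \<open>S \<noteq> {}\<close> by auto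
    show "2 \<le> real k" using two_le_k[OF twice \<open>S \<subseteq> V\<close> \<open>S \<noteq> {}\<close>] by simp
    show "0 \<le> code_norm V T w c" unfolding norm by (intro divide_nonneg_nonneg sum_nonneg wV_nonneg)
    show "2 / (real s * (real k - 1)) * (1 - (real k - 1) * lam) \<le> code_norm V T w c"
      unfolding norm using assms(4,3) twice \<open>S \<subseteq> V\<close> \<open>S \<noteq> {}\<close> by (rule support_weight_ratio_ge)
  qed (rule assms(3))
qed

end
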